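(* Let $G$ be a complete multipartite graph. Consider the following greedy procedure with $t=1$: while uncolored vertices remain, let $H$ be the subgraph induced by the uncolored vertices; if the largest part of $H$ has at least $2$ vertices, let $W$ be that entire part, otherwise let $W$ be a maximum $1$-sparse set of $H$; assign a new color to all vertices of $W$. Then the resulting coloring is a $1$-relaxed coloring of $G$ using exactly $\chi_1(G)$ colors.
   Context: A set $S\subseteq V(G)$ is $1$-sparse if the induced subgraph $G[S]$ has maximum degree at most $1$. A map $f$ from $V(G)$ to a finite set of colors is a $1$-relaxed coloring if every vertex $u$ has at most one neighbor $v$ with $f(v)=f(u)$; $\chi_1(G)$ is the minimum number of colors in such a coloring. *)

theory Defs
  imports Main "HOL-Library.Disjoint_Sets"
begin

text \<open>Graphs are given by a finite vertex set V and a symmetric irreflexive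
adjacency relation E.\<close>

definition one_sparse :: "('a \<Rightarrow> 'a \<Rightarrow> bool) \<Rightarrow> 'a set \<Rightarrow> 'a set \<Rightarrow> bool" where
  "one_sparse E U S \<longleftrightarrow> S \<subseteq> U \<and> (\<forall>u\<in>S. card {v\<in>S. E u v} \<le> 1)"

definition max_one_sparse :: "('a \<Rightarrow> 'a \<Rightarrow> bool) \<Rightarrow> 'a set \<Rightarrow> 'a set \<Rightarrow> bool" where
  "max_one_sparse E U S \<longleftrightarrow> one_sparse E U S \<and> (\<forall>T. one_sparse E U T \<longrightarrow> card T \<le> card S)"

definition relaxed_coloring :: "('a \<Rightarrow> 'a \<Rightarrow> bool) \<Rightarrow> 'a set \<Rightarrow> ('a \<Rightarrow> 'c) \<Rightarrow> bool" where
  "relaxed_coloring E V f \<longleftrightarrow> (\<forall>u\<in>V. card {v\<in>V. E u v \<and> f v = f u} \<le> 1)"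

definition chi1 :: "('a \<Rightarrow> 'a \<Rightarrow> bool) \<Rightarrow> 'a set \<Rightarrow> nat" where
  "chi1 E V = (LEAST k. \<exists>f :: 'a \<Rightarrow> nat. f ` V \<subseteq> {..<k} \<and> relaxed_coloring E V f)"

definition cmp_adj :: "'a set set \<Rightarrow> 'a \<Rightarrow> 'a \<Rightarrow> bool" where
  "cmp_adj P u v \<longleftrightarrow> u \<in> \<Union>P \<and> v \<in> \<Union>P \<and> \<not> (\<exists>p\<in>P. u \<in> p \<and> v \<in> p)"

definition parts_on :: "'a set set \<Rightarrow> 'a set \<Rightarrow> 'a set set" where
  "parts_on P U = {p \<inter> U | p. p \<in> P} - {{}}"

definition greedy_choice :: "'a set set \<Rightarrow> 'a set \<Rightarrow> 'a set \<Rightarrow> bool" where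
  "greedy_choice P U W \<longleftrightarrow>
     ((\<exists>q\<in>parts_on P U. card q \<ge> 2) \<and> W \<in> parts_on P U \<and> (\<forall>q\<in>parts_on P U. card q \<le> card W))
   \<or> ((\<forall>q\<in>parts_on P U. card q < 2) \<and> max_one_sparse (cmp_adj P) U W)"

text \<open>greedy_run P U ws: starting with uncoloured set U, the procedure may produce
the sequence of colour classes ws (class i gets colour i).\<close>

inductive greedy_run :: "'a set set \<Rightarrow> 'a set \<Rightarrow> 'a set list \<Rightarrow> bool" for P where
  run_nil: "greedy_run P {} []"
| run_cons: "U \<noteq> {} \<Longrightarrow> greedy_choice P U W \<Longrightarrow> greedy_run P (U - W) ws \<Longrightarrow> greedy_run P U (W # ws)"

definition run_coloring :: "'a set list \<Rightarrow> 'a \<Rightarrow> nat" where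
  "run_coloring ws v = (THE i. i < length ws \<and> v \<in> ws ! i)"

end

theory Submission
  imports Defs
begin

(* Weigh a set U of vertices by w(U) = sum over the parts p of min 2 |p \<inter> U|.
   A 1-sparse set of a complete multipartite graph lies inside one part or has at most two
   vertices, so it weighs at most 2, and w is subadditive; hence a 1-relaxed colouring needs
   at least w(V)/2 colours.  Conversely each greedy step lowers the weight of the uncoloured
   set U by at least min 2 |U|: a whole part with at least two vertices weighs exactly 2, and
   once all parts of U are singletons w(U) = |U| and a maximum 1-sparse set has min 2 |U|
   vertices.  So the greedy run uses at most (w(V) + 1)/2 colours, and both bounds meet. *)

definition part_weight :: "'a set set \<Rightarrow> 'a set \<Rightarrow> nat" where
  "part_weight P U = (\<Sum>p\<in>P. min 2 (card (p \<inter> U)))"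

lemma part_weight_empty [simp]: "part_weight P {} = 0"
  unfolding part_weight_def by simp

lemma cmp_adj_irrefl: "\<not> cmp_adj P u u"
  unfolding cmp_adj_def by blast

lemma one_sparse_subset:
  "one_sparse E U S \<Longrightarrow> U \<subseteq> U' \<Longrightarrow> one_sparse E U' S"
  unfolding one_sparse_def by blast

lemma one_sparse_if_card_le_2:
  assumes irrefl: "\<And>u. \<not> E u u" and "S \<subseteq> U" "finite S" "card S \<le> 2"
  shows "one_sparse E U S"
  unfolding one_sparse_def
proof (intro conjI ballI)
  fix u assume "u \<in> S"
  have "{v\<in>S. E u v} \<subseteq> S - {u}" using irrefl by blast
  then have "card {v\<in>S. E u v} \<le> card (S - {u})" using \<open>finite S\<close> by (intro card_mono) auto
  also have "\<dots> \<le> 1" using \<open>u \<in> S\<close> \<open>finite S\<close> \<open>card S \<le> 2\<close> by simp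
  finally show "card {v\<in>S. E u v} \<le> 1" .
qed (use \<open>S \<subseteq> U\<close> in simp)

lemma relaxed_coloring_subset:
  assumes "relaxed_coloring E V f" "U \<subseteq> V" "finite V"
  shows "relaxed_coloring E U f"
  unfolding relaxed_coloring_def
proof
  fix u assume "u \<in> U"
  have "card {v\<in>U. E u v \<and> f v = f u} \<le> card {v\<in>V. E u v \<and> f v = f u}"
    using assms(2,3) by (intro card_mono) auto
  also have "\<dots> \<le> 1" using assms(1,2) \<open>u \<in> U\<close> unfolding relaxed_coloring_def by blast
  finally show "card {v\<in>U. E u v \<and> f v = f u} \<le> 1" .
qed

lemma one_sparse_color_class:
  assumes "relaxed_coloring E U f"
  shows "one_sparse E U {v\<in>U. f v = c}"
  unfolding one_sparse_def
proof (intro conjI ballI)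
  fix u assume u: "u \<in> {v\<in>U. f v = c}"
  then have "{v\<in>{v\<in>U. f v = c}. E u v} = {v\<in>U. E u v \<and> f v = f u}" by auto
  moreover have "card {v\<in>U. E u v \<and> f v = f u} \<le> 1"
    using assms u unfolding relaxed_coloring_def by blast
  ultimately show "card {v\<in>{v\<in>U. f v = c}. E u v} \<le> 1" by simp
qed auto

lemma chi1_eqI:
  fixes f :: "'a \<Rightarrow> nat"
  assumes "f ` V \<subseteq> {..<k}" "relaxed_coloring E V f"
    and "\<And>k' (g :: 'a \<Rightarrow> nat). g ` V \<subseteq> {..<k'} \<Longrightarrow> relaxed_coloring E V g \<Longrightarrow> k \<le> k'"
  shows "chi1 E V = k"
  unfolding chi1_def
proof (rule Least_equality)
  show "\<exists>f :: 'a \<Rightarrow> nat. f ` V \<subseteq> {..<k} \<and> relaxed_coloring E V f" using assms(1,2) by blast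
qed (use assms(3) in blast)

lemma run_coloring_eq:
  assumes "\<And>i j. i < j \<Longrightarrow> j < length ws \<Longrightarrow> ws ! i \<inter> ws ! j = {}"
    and "i < length ws" "v \<in> ws ! i"
  shows "run_coloring ws v = i"
  unfolding run_coloring_def
proof (rule the_equality)
  fix j assume j: "j < length ws \<and> v \<in> ws ! j"
  show "j = i"
    using assms(1)[of i j] assms(1)[of j i] assms(2,3) j by (cases i j rule: linorder_cases) auto
qed (use assms(2,3) in blast)

lemma greedy_run_empty:
  assumes "greedy_run P {} ws"
  shows "ws = []"
  using assms by (cases rule: greedy_run.cases) auto

lemma greedy_choice_nonempty_one_sparse:
  assumes "greedy_choice P U W" "U \<noteq> {}"
  shows "W \<noteq> {} \<and> one_sparse (cmp_adj P) U W"
  using assms(1) unfolding greedy_choice_def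
proof (elim disjE conjE)
  assume "W \<in> parts_on P U"
  then obtain p where p: "p \<in> P" "W = p \<inter> U" "W \<noteq> {}" unfolding parts_on_def by blast
  have no_edge: "\<not> cmp_adj P u v" if "u \<in> W" "v \<in> W" for u v
    using that p(1) unfolding p(2) cmp_adj_def by blast
  have "card {v\<in>W. cmp_adj P u v} \<le> 1" if "u \<in> W" for u
  proof -
    have "{v\<in>W. cmp_adj P u v} = {}" using no_edge[OF that] by blast
    then show ?thesis by (metis card.empty le0)
  qed
  moreover have "W \<subseteq> U" using p(2) by blast
  ultimately show ?thesis using p(3) unfolding one_sparse_def by blast
next
  assume max: "max_one_sparse (cmp_adj P) U W"
  obtain x where "x \<in> U" using assms(2) by blast
  then have "one_sparse (cmp_adj P) U {x}"
    by (intro one_sparse_if_card_le_2) (auto simp: cmp_adj_irrefl)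
  then have "card {x} \<le> card W" using max unfolding max_one_sparse_def by blast
  then have "W \<noteq> {}" by auto
  with max show ?thesis unfolding max_one_sparse_def by blast
qed

lemma greedy_run_Union: "greedy_run P U ws \<Longrightarrow> \<Union>(set ws) = U"
proof (induction rule: greedy_run.induct)
  case (run_cons U W ws)
  have "W \<subseteq> U"
    using greedy_choice_nonempty_one_sparse[OF run_cons.hyps(2,1)] unfolding one_sparse_def by blast
  with run_cons.IH show ?case by auto
qed simp

lemma greedy_run_classes:
  "greedy_run P U ws \<Longrightarrow> W \<in> set ws \<Longrightarrow> W \<noteq> {} \<and> one_sparse (cmp_adj P) U W"
proof (induction arbitrary: W rule: greedy_run.induct)
  case (run_cons U W' ws)
  show ?case
  proof (cases "W = W'")
    case False
    then have "W \<in> set ws" using run_cons.prems by simp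
    then have "W \<noteq> {} \<and> one_sparse (cmp_adj P) (U - W') W" by (rule run_cons.IH)
    then show ?thesis using one_sparse_subset[of "cmp_adj P" "U - W'" W U] by blast
  qed (use greedy_choice_nonempty_one_sparse[OF run_cons.hyps(2,1)] in simp)
qed simp

lemma greedy_run_disjoint:
  "greedy_run P U ws \<Longrightarrow> i < j \<Longrightarrow> j < length ws \<Longrightarrow> ws ! i \<inter> ws ! j = {}"
proof (induction arbitrary: i j rule: greedy_run.induct)
  case (run_cons U W ws)
  obtain j' where j: "j = Suc j'" "j' < length ws" using run_cons.prems by (cases j) auto
  show ?case
  proof (cases i)
    case 0
    have "ws ! j' \<subseteq> U - W" using greedy_run_Union[OF run_cons.hyps(3)] j(2) nth_mem by blast
    with 0 j show ?thesis by auto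
  next
    case (Suc i')
    with j run_cons.prems run_cons.IH show ?thesis by simp
  qed
qed simp

lemma greedy_run_coloring_eq:
  assumes run: "greedy_run P U ws" and "i < length ws" "v \<in> ws ! i"
  shows "run_coloring ws v = i"
proof (rule run_coloring_eq[OF _ assms(2,3)])
  fix i' j assume "i' < j" "j < length ws"
  then show "ws ! i' \<inter> ws ! j = {}" by (rule greedy_run_disjoint[OF run])
qed

lemma greedy_run_coloring_mem:
  assumes run: "greedy_run P U ws" and "v \<in> U"
  shows "run_coloring ws v < length ws \<and> v \<in> ws ! run_coloring ws v"
proof -
  obtain i where "i < length ws" "v \<in> ws ! i"
    using greedy_run_Union[OF run] \<open>v \<in> U\<close> by (auto simp: in_set_conv_nth)
  then show ?thesis using greedy_run_coloring_eq[OF run] by simp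
qed

lemma greedy_run_relaxed_coloring:
  assumes run: "greedy_run P U ws"
  shows "relaxed_coloring (cmp_adj P) U (run_coloring ws)"
  unfolding relaxed_coloring_def
proof
  fix u assume "u \<in> U"
  define i where "i = run_coloring ws u"
  have i: "i < length ws" "u \<in> ws ! i"
    using greedy_run_coloring_mem[OF run \<open>u \<in> U\<close>] unfolding i_def by auto
  have "ws ! i \<subseteq> U" using greedy_run_Union[OF run] i(1) nth_mem by blast
  then have "{v\<in>U. cmp_adj P u v \<and> run_coloring ws v = i} = {v\<in>ws ! i. cmp_adj P u v}"
    using greedy_run_coloring_mem[OF run] greedy_run_coloring_eq[OF run i(1)] by auto
  moreover have "one_sparse (cmp_adj P) U (ws ! i)"
    using greedy_run_classes[OF run] i(1) nth_mem by blast
  ultimately show "card {v\<in>U. cmp_adj P u v \<and> run_coloring ws v = run_coloring ws u} \<le> 1"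
    using i(2) unfolding i_def one_sparse_def by simp
qed

lemma greedy_run_coloring_image:
  assumes run: "greedy_run P U ws"
  shows "run_coloring ws ` U = {..<length ws}"
proof
  show "run_coloring ws ` U \<subseteq> {..<length ws}" using greedy_run_coloring_mem[OF run] by auto
next
  show "{..<length ws} \<subseteq> run_coloring ws ` U"
  proof
    fix i assume "i \<in> {..<length ws}"
    then have i: "i < length ws" by simp
    have "ws ! i \<noteq> {}" using greedy_run_classes[OF run nth_mem[OF i]] by blast
    then obtain v where "v \<in> ws ! i" by blast
    moreover have "ws ! i \<subseteq> U" using greedy_run_Union[OF run] i nth_mem by blast
    ultimately show "i \<in> run_coloring ws ` U"
      using greedy_run_coloring_eq[OF run i] by (metis image_eqI subsetD)
  qed
qed

context
  fixes V :: "'a set" and P :: "'a set set"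
  assumes finite_V: "finite V" and partition: "partition_on V P"
begin

lemma finite_P: "finite P"
  using finite_elements[OF finite_V partition] .

lemma finite_part: "p \<in> P \<Longrightarrow> finite p"
  using partition_onD1[OF partition] finite_subset[OF _ finite_V] by blast

lemma finite_subset_V: "U \<subseteq> V \<Longrightarrow> finite U"
  using finite_V by (rule rev_finite_subset)

lemma part_ofE:
  assumes "x \<in> V"
  obtains p where "p \<in> P" "x \<in> p"
  using partition_onD1[OF partition] assms by blast

lemma cmp_adj_iff:
  assumes "p \<in> P" "u \<in> p" "v \<in> V"
  shows "cmp_adj P u v \<longleftrightarrow> v \<notin> p"
proof -
  have "q = p" if "q \<in> P" "u \<in> q" for q
    using disjointD[OF partition_onD2[OF partition] that(1) assms(1)] that(2) assms(2) by blast
  then show ?thesis using assms partition_onD1[OF partition] unfolding cmp_adj_def by blast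
qed

lemma sum_card_parts:
  assumes "U \<subseteq> V"
  shows "(\<Sum>p\<in>P. card (p \<inter> U)) = card U"
proof -
  have "(\<Union>p\<in>P. p \<inter> U) = U" using assms partition_onD1[OF partition] by blast
  moreover have "card (\<Union>p\<in>P. p \<inter> U) = (\<Sum>p\<in>P. card (p \<inter> U))"
    using finite_P finite_part disjointD[OF partition_onD2[OF partition]]
    by (intro card_UN_disjoint) auto
  ultimately show ?thesis by simp
qed

lemma part_weight_le_card: "U \<subseteq> V \<Longrightarrow> part_weight P U \<le> card U"
  unfolding part_weight_def sum_card_parts[symmetric] by (intro sum_mono) simp

lemma part_weight_eq_card:
  assumes "U \<subseteq> V" "\<And>p. p \<in> P \<Longrightarrow> card (p \<inter> U) \<le> 2"
  shows "part_weight P U = card U"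
  unfolding part_weight_def sum_card_parts[OF assms(1), symmetric]
  using assms(2) by (intro sum.cong) auto

lemma part_weight_Diff_subset_part:
  assumes "p \<in> P" "D \<subseteq> p"
  shows "part_weight P U + min 2 (card (p \<inter> (U - D)))
       = part_weight P (U - D) + min 2 (card (p \<inter> U))"
proof -
  have other_parts: "q \<inter> (U - D) = q \<inter> U" if "q \<in> P - {p}" for q
    using that assms disjointD[OF partition_onD2[OF partition], of q p] by blast
  have "part_weight P X = min 2 (card (p \<inter> X)) + (\<Sum>q\<in>P - {p}. min 2 (card (q \<inter> X)))" for X
    unfolding part_weight_def using sum.remove[OF finite_P assms(1)] by simp
  with other_parts show ?thesis by simp
qed

lemma part_weight_subset_part_le_2:
  assumes "p \<in> P" "C \<subseteq> p"
  shows "part_weight P C \<le> 2"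
  using part_weight_Diff_subset_part[OF assms, of C] by simp

lemma part_weight_subadditive: "part_weight P U \<le> part_weight P (U - C) + part_weight P C"
  unfolding part_weight_def sum.distrib[symmetric]
proof (rule sum_mono)
  fix p assume "p \<in> P"
  have "card (p \<inter> U) \<le> card ((p \<inter> (U - C)) \<union> (p \<inter> C))"
    using finite_part[OF \<open>p \<in> P\<close>] by (intro card_mono) auto
  also have "\<dots> \<le> card (p \<inter> (U - C)) + card (p \<inter> C)" by (rule card_Un_le)
  finally show "min 2 (card (p \<inter> U)) \<le> min 2 (card (p \<inter> (U - C))) + min 2 (card (p \<inter> C))"
    by linarith
qed

lemma card_one_sparse_Diff_part:
  assumes "one_sparse (cmp_adj P) V C" "p \<in> P" "x \<in> p" "x \<in> C"
  shows "card (C - p) \<le> 1"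
proof -
  have "C \<subseteq> V" using assms(1) unfolding one_sparse_def by blast
  then have "C - p \<subseteq> {v\<in>C. cmp_adj P x v}" using cmp_adj_iff[OF assms(2,3)] by blast
  moreover have "finite {v\<in>C. cmp_adj P x v}" using finite_subset_V \<open>C \<subseteq> V\<close> by simp
  ultimately have "card (C - p) \<le> card {v\<in>C. cmp_adj P x v}" by (rule card_mono[rotated])
  also have "\<dots> \<le> 1" using assms(1,4) unfolding one_sparse_def by blast
  finally show ?thesis .
qed

lemma one_sparse_subset_part_or_card_le_2:
  assumes sparse: "one_sparse (cmp_adj P) V C"
  shows "(\<exists>p\<in>P. C \<subseteq> p) \<or> card C \<le> 2"
proof (cases "C = {}")
  case False
  have "C \<subseteq> V" using sparse unfolding one_sparse_def by blast
  obtain x where "x \<in> C" using False by blast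
  then have "x \<in> V" using \<open>C \<subseteq> V\<close> by blast
  then obtain p where p: "p \<in> P" "x \<in> p" by (rule part_ofE)
  show ?thesis
  proof (cases "C \<subseteq> p")
    case False
    then obtain y where y: "y \<in> C" "y \<notin> p" by blast
    then have "y \<in> V" using \<open>C \<subseteq> V\<close> by blast
    then obtain q where q: "q \<in> P" "y \<in> q" by (rule part_ofE)
    have "p \<inter> q = {}" using disjointD[OF partition_onD2[OF partition] p(1) q(1)] y q by blast
    then have "C \<subseteq> (C - p) \<union> (C - q)" by blast
    moreover have "finite ((C - p) \<union> (C - q))" using finite_subset_V[OF \<open>C \<subseteq> V\<close>] by simp
    ultimately have "card C \<le> card ((C - p) \<union> (C - q))" by (rule card_mono[rotated])
    also have "\<dots> \<le> card (C - p) + card (C - q)" by (rule card_Un_le)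
    also have "\<dots> \<le> 2"
      using card_one_sparse_Diff_part[OF sparse p \<open>x \<in> C\<close>]
        card_one_sparse_Diff_part[OF sparse q \<open>y \<in> C\<close>] by simp
    finally show ?thesis by simp
  qed (use p in blast)
qed simp

lemma part_weight_one_sparse_le_2:
  assumes "one_sparse (cmp_adj P) V C"
  shows "part_weight P C \<le> 2"
proof (cases "\<exists>p\<in>P. C \<subseteq> p")
  case False
  then have "card C \<le> 2" using one_sparse_subset_part_or_card_le_2[OF assms] by blast
  moreover have "C \<subseteq> V" using assms unfolding one_sparse_def by blast
  ultimately show ?thesis using part_weight_le_card[of C] by simp
qed (use part_weight_subset_part_le_2 in blast)

lemma part_weight_le_colors:
  assumes "finite K" "relaxed_coloring (cmp_adj P) U f" "U \<subseteq> V" "f ` U \<subseteq> K"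
  shows "part_weight P U \<le> 2 * card K"
  using assms
proof (induction K arbitrary: U rule: finite_induct)
  case (insert c K)
  define C where "C = {v\<in>U. f v = c}"
  have "relaxed_coloring (cmp_adj P) (U - C) f"
    using relaxed_coloring_subset[OF insert.prems(1) _ finite_subset_V[OF insert.prems(2)]] by blast
  moreover have "f ` (U - C) \<subseteq> K" using insert.prems(3) unfolding C_def by auto
  ultimately have "part_weight P (U - C) \<le> 2 * card K"
    using insert.IH insert.prems(2) by blast
  moreover have "one_sparse (cmp_adj P) V C" unfolding C_def
    by (rule one_sparse_subset[OF one_sparse_color_class[OF insert.prems(1)] insert.prems(2)])
  then have "part_weight P C \<le> 2" by (rule part_weight_one_sparse_le_2)
  ultimately show ?case using part_weight_subadditive[of U C] insert.hyps by simp
qed simp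

lemma part_weight_Diff_part:
  assumes "p \<in> P"
  shows "part_weight P (U - p \<inter> U) + min 2 (card (p \<inter> U)) = part_weight P U"
proof -
  have "p \<inter> (U - p \<inter> U) = {}" by blast
  then show ?thesis using part_weight_Diff_subset_part[OF assms, of "p \<inter> U" U] by simp
qed

lemma part_weight_Diff_max_one_sparse:
  assumes "U \<subseteq> V" "\<And>p. p \<in> P \<Longrightarrow> card (p \<inter> U) \<le> 2"
    and max: "max_one_sparse (cmp_adj P) U W"
  shows "part_weight P (U - W) + min 2 (card U) \<le> part_weight P U"
proof -
  have "W \<subseteq> U" using max unfolding max_one_sparse_def one_sparse_def by blast
  have finite_U: "finite U" using finite_subset_V[OF assms(1)] .
  have "part_weight P U = card U" using part_weight_eq_card assms(1,2) by blast
  also have "\<dots> = card (U - W) + card W"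
    using card_Diff_subset[OF rev_finite_subset[OF finite_U \<open>W \<subseteq> U\<close>] \<open>W \<subseteq> U\<close>]
      card_mono[OF finite_U \<open>W \<subseteq> U\<close>] by simp
  finally have "part_weight P U = card (U - W) + card W" .
  moreover have "part_weight P (U - W) \<le> card (U - W)"
    using assms(1) by (intro part_weight_le_card) blast
  moreover obtain T where T: "T \<subseteq> U" "card T = min 2 (card U)" "finite T"
    using obtain_subset_with_card_n[of "min 2 (card U)" U] by auto
  moreover have "card T \<le> card W"
  proof -
    have "one_sparse (cmp_adj P) U T"
      using T by (intro one_sparse_if_card_le_2) (auto simp: cmp_adj_irrefl)
    then show ?thesis using max unfolding max_one_sparse_def by blast
  qed
  ultimately show ?thesis by linarith
qed

lemma part_weight_greedy_choice:
  assumes "greedy_choice P U W" "U \<subseteq> V"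
  shows "part_weight P (U - W) + min 2 (card U) \<le> part_weight P U"
  using assms(1) unfolding greedy_choice_def
proof (elim disjE conjE)
  assume big: "\<exists>q\<in>parts_on P U. 2 \<le> card q" and W: "W \<in> parts_on P U"
    and largest: "\<forall>q\<in>parts_on P U. card q \<le> card W"
  obtain p where p: "p \<in> P" "W = p \<inter> U" using W unfolding parts_on_def by blast
  have "card W \<ge> 2" using big largest le_trans by blast
  then show ?thesis using part_weight_Diff_part[OF p(1), of U] p(2) by simp
next
  assume singletons: "\<forall>q\<in>parts_on P U. card q < 2" and "max_one_sparse (cmp_adj P) U W"
  have "card (p \<inter> U) \<le> 2" if "p \<in> P" for p
  proof (cases "p \<inter> U = {}")
    case False
    then have "p \<inter> U \<in> parts_on P U" using that unfolding parts_on_def by blast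
    then show ?thesis using singletons by fastforce
  qed simp
  then show ?thesis using part_weight_Diff_max_one_sparse assms(2) \<open>max_one_sparse (cmp_adj P) U W\<close>
    by blast
qed

lemma greedy_run_length_le_part_weight:
  "greedy_run P U ws \<Longrightarrow> U \<subseteq> V \<Longrightarrow> 2 * length ws \<le> part_weight P U + 1"
proof (induction rule: greedy_run.induct)
  case (run_cons U W ws)
  have step: "part_weight P (U - W) + min 2 (card U) \<le> part_weight P U"
    using part_weight_greedy_choice run_cons.hyps(2) run_cons.prems by blast
  show ?case
  proof (cases "card U \<ge> 2")
    case True
    then have "min 2 (card U) = 2" by simp
    moreover have "2 * length ws \<le> part_weight P (U - W) + 1"
      using run_cons.IH run_cons.prems by blast
    ultimately show ?thesis using step by simp
  next
    case False
    have W: "W \<noteq> {}" "W \<subseteq> U"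
      using greedy_choice_nonempty_one_sparse[OF run_cons.hyps(2,1)] unfolding one_sparse_def by auto
    have "finite U" using finite_subset_V[OF run_cons.prems] .
    then have "card U \<noteq> 0" using run_cons.hyps(1) by simp
    with False have "card U = 1" by linarith
    then obtain u where "U = {u}" by (rule card_1_singletonE)
    with W have "U - W = {}" by blast
    then have "ws = []" using greedy_run_empty run_cons.hyps(3) by metis
    with \<open>U - W = {}\<close> \<open>card U = 1\<close> show ?thesis using step by simp
  qed
qed simp

end

theorem mainTheorem10:
  fixes V :: "'a set" and P :: "'a set set" and ws :: "'a set list"
  assumes "finite V" and "partition_on V P" and "greedy_run P V ws"
  shows "relaxed_coloring (cmp_adj P) V (run_coloring ws)
       \<and> card (run_coloring ws ` V) = chi1 (cmp_adj P) V"
proof -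
  note coloring = greedy_run_relaxed_coloring[OF assms(3)] greedy_run_coloring_image[OF assms(3)]
  have "chi1 (cmp_adj P) V = length ws"
  proof (rule chi1_eqI[of "run_coloring ws"])
    fix k and g :: "'a \<Rightarrow> nat"
    assume "g ` V \<subseteq> {..<k}" "relaxed_coloring (cmp_adj P) V g"
    then have "part_weight P V \<le> 2 * k"
      using part_weight_le_colors[OF assms(1,2), of "{..<k}" V g] by simp
    moreover have "2 * length ws \<le> part_weight P V + 1"
      using greedy_run_length_le_part_weight[OF assms(1,2,3)] by simp
    ultimately show "length ws \<le> k" by simp
  qed (use coloring in auto)
  then show ?thesis using coloring by simp
qed

end
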